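(* Let $J\subset\mathbb{C}$ be a Jordan curve which has continuously turning tangents in a neighborhood of a point $A_0\in J$. Then for every (nondegenerate) triangle $T$ there exist points $A_1,A_2\in J$ such that the triangle $A_0A_1A_2$ is similar to $T$.
   Context: "$J$ has continuously turning tangents in a neighborhood of $A_0$" means: there is an open arc $B\subset J$ containing $A_0$ admitting a parametrization $h:(\alpha,\beta)\to B$ that is continuously differentiable with $h'(t)\neq0$. *)

theory Defs
  imports "HOL-Analysis.Analysis"
begin

definition jordan_curve :: "complex set \<Rightarrow> bool" where
  "jordan_curve J \<longleftrightarrow> (\<exists>g. simple_path g \<and> pathfinish g = pathstart g \<and> path_image g = J)"

definition cont_turning_tangents_near :: "complex set \<Rightarrow> complex \<Rightarrow> bool" where
  "cont_turning_tangents_near J A0 \<longleftrightarrow>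
     (\<exists>(\<alpha>::real) \<beta> (h::real \<Rightarrow> complex) h'. \<alpha> < \<beta> \<and>
        inj_on h {\<alpha><..<\<beta>} \<and> h ` {\<alpha><..<\<beta>} \<subseteq> J \<and>
        openin (top_of_set J) (h ` {\<alpha><..<\<beta>}) \<and>
        A0 \<in> h ` {\<alpha><..<\<beta>} \<and>
        (\<forall>t\<in>{\<alpha><..<\<beta>}. (h has_vector_derivative h' t) (at t)) \<and>
        continuous_on {\<alpha><..<\<beta>} h' \<and>
        (\<forall>t\<in>{\<alpha><..<\<beta>}. h' t \<noteq> 0))"

definition similar_tri :: "complex \<Rightarrow> complex \<Rightarrow> complex \<Rightarrow> complex \<Rightarrow> complex \<Rightarrow> complex \<Rightarrow> bool" where
  "similar_tri A0 A1 A2 a b c \<longleftrightarrow>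
     (\<exists>r>0. dist A0 A1 = r * dist a b \<and> dist A1 A2 = r * dist b c \<and> dist A2 A0 = r * dist c a)"

end

theory Submission
  imports Defs
begin

text \<open>Translate and scale so that A0 = 0 and the tangent of J at A0 is the real axis, and let
  \<omega> = (c - a) / (b - a), which is not real. Near 0 the curve is then a flat graph over the real
  axis, so narrow vertical cones above and below 0 avoid it; a vertical segment through a point
  of the complement close to 0 shows that these two cones lie in different components of the
  complement of J. The connected set \<omega> * (J - {0}) passes through both cones, hence meets J,
  say in \<omega> * z with z \<in> J - {0}; then the triangle 0, z, \<omega> * z is similar to a, b, c.\<close>

lemma Im_ratio_nonzero_if_not_collinear:
  fixes a b c :: complex
  assumes "\<not> collinear {a, b, c}"
  shows "Im ((c - a) / (b - a)) \<noteq> 0"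
proof
  assume "Im ((c - a) / (b - a)) = 0"
  then have "collinear {0, b - a, c - a}"
    by (simp add: collinear_iff_Reals complex_is_Real_iff)
  then have "collinear {b, a, c}"
    by (simp add: collinear_3)
  then show False
    using assms by (simp add: insert_commute)
qed

lemma similar_tri_if_rotation:
  fixes a b c z1 z2 A0 :: complex
  assumes "b \<noteq> a" "z1 \<noteq> A0" "z2 - A0 = ((c - a) / (b - a)) * (z1 - A0)"
  shows "similar_tri A0 z1 z2 a b c"
  unfolding similar_tri_def
proof (intro exI conjI)
  define r where "r = cmod (z1 - A0) / cmod (b - a)"
  show "r > 0" using assms unfolding r_def by simp
  show "dist A0 z1 = r * dist a b"
    unfolding r_def dist_norm using assms by (simp add: norm_minus_commute)
  have "z2 - z1 = ((c - b) / (b - a)) * (z1 - A0)"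
    using assms by (simp add: field_simps)
  then have "cmod (z2 - z1) = cmod (c - b) / cmod (b - a) * cmod (z1 - A0)"
    by (simp add: norm_mult norm_divide)
  then show "dist z1 z2 = r * dist b c"
    unfolding r_def dist_norm by (simp add: norm_minus_commute[of z1] norm_minus_commute[of b])
  show "dist z2 A0 = r * dist c a"
    unfolding r_def dist_norm using assms by (simp add: norm_mult norm_divide norm_minus_commute)
qed

lemma jordan_curve_continuous_image:
  assumes "jordan_curve J" "continuous_on J f" "inj_on f J"
  shows "jordan_curve (f ` J)"
proof -
  obtain g where g: "simple_path g" "pathfinish g = pathstart g" "path_image g = J"
    using assms(1) unfolding jordan_curve_def by blast
  then have "simple_path (f \<circ> g)"
    using simple_path_continuous_image assms(2,3) by blast
  with g show ?thesis
    unfolding jordan_curve_def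
    by (metis path_image_compose pathfinish_compose pathstart_compose)
qed

lemma connected_jordan_curve_delete:
  assumes "jordan_curve J" "A \<in> J"
  shows "connected (J - {A})"
proof -
  obtain g where g: "simple_path g" "pathfinish g = pathstart g" "path_image g = J"
    using assms(1) unfolding jordan_curve_def by blast
  obtain s where s: "s \<in> {0..1}" "g s = A"
    using assms(2) g(3) unfolding path_image_def by auto
  have "simple_path (shiftpath s g)"
    using simple_path_shiftpath g s(1) by auto
  then show ?thesis
    using connected_simple_path_endless[of "shiftpath s g"]
    by (simp add: path_image_shiftpath[OF s(1) g(2)] endpoints_shiftpath[OF g(2) s(1)] g(3) s(2))
qed

lemma jordan_curve_inside_outside:
  assumes "jordan_curve J"
  shows "open (inside J)" "open (outside J)" "inside J \<inter> outside J = {}"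
    "inside J \<union> outside J = - J" "frontier (inside J) = J" "frontier (outside J) = J"
proof -
  obtain g where "simple_path g" "pathfinish g = pathstart g" "path_image g = J"
    using assms unfolding jordan_curve_def by blast
  from Jordan_inside_outside[OF this(1,2)] this(3)
  show "open (inside J)" "open (outside J)" "inside J \<inter> outside J = {}"
    "inside J \<union> outside J = - J" "frontier (inside J) = J" "frontier (outside J) = J"
    by auto
qed

lemma jordan_curve_delete_inj_into_reals:
  assumes "jordan_curve J" "P \<in> J"
  obtains f :: "complex \<Rightarrow> real" where "continuous_on (J - {P}) f" "inj_on f (J - {P})"
proof -
  obtain g where g: "simple_path g" "pathfinish g = pathstart g" "path_image g = J"
    using assms(1) unfolding jordan_curve_def by blast
  have "J homeomorphic sphere (0::complex) 1"
    using homeomorphic_simple_path_image_circle[OF g(1,2), of 1 0] g(3) by simp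
  then obtain \<psi> \<psi>' where \<psi>: "homeomorphism J (sphere (0::complex) 1) \<psi> \<psi>'"
    unfolding homeomorphic_def by blast
  have "\<psi> ` (J - {P}) = sphere 0 1 - {\<psi> P}"
  proof -
    have "inj_on \<psi> J"
      by (rule inj_on_inverseI[where g = \<psi>']) (rule homeomorphism_apply1[OF \<psi>])
    then show ?thesis
      using assms(2) inj_on_image_set_diff[of \<psi> J J "{P}"] homeomorphism_image1[OF \<psi>] by simp
  qed
  then have "J - {P} homeomorphic sphere (0::complex) 1 - {\<psi> P}"
    using homeomorphism_of_subsets[OF \<psi>, of "J - {P}" "sphere 0 1"]
    unfolding homeomorphic_def by blast
  also have "\<dots> homeomorphic {x::complex. 1 \<bullet> x = 0}"
    using homeomorphism_image1[OF \<psi>] assms(2)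
    by (intro homeomorphic_punctured_sphere_hyperplane) auto
  finally obtain \<tau> \<tau>' where \<tau>: "homeomorphism (J - {P}) {x::complex. 1 \<bullet> x = 0} \<tau> \<tau>'"
    unfolding homeomorphic_def by blast
  show ?thesis
  proof
    show "continuous_on (J - {P}) (Im \<circ> \<tau>)"
      using homeomorphism_cont1[OF \<tau>] by (intro continuous_on_compose continuous_intros)
    have "\<tau> z = \<i> * of_real (Im (\<tau> z))" if "z \<in> J - {P}" for z
      using homeomorphism_image1[OF \<tau>] that by (auto simp: inner_complex_def complex_eq_iff)
    then show "inj_on (Im \<circ> \<tau>) (J - {P})"
      by (intro inj_on_inverseI[where g = "\<tau>' \<circ> (\<lambda>y. \<i> * of_real y)"])
        (metis comp_apply homeomorphism_apply1[OF \<tau>])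
  qed
qed

text \<open>J minus a point outside h ` {a<..<b} injects continuously into the reals, where h becomes
  an open map by invariance of domain in dimension one.\<close>
lemma openin_image_interval_in_jordan_curve:
  fixes h :: "real \<Rightarrow> complex"
  assumes "jordan_curve J" and h: "continuous_on {\<alpha><..<\<beta>} h" "inj_on h {\<alpha><..<\<beta>}"
    "h ` {\<alpha><..<\<beta>} \<subseteq> J" and ab: "\<alpha> \<le> a" "a < b" "b < \<beta>"
  shows "openin (top_of_set J) (h ` {a<..<b})"
proof -
  define t1 where "t1 = (b + \<beta>) / 2"
  define S where "S = {\<alpha><..<t1}"
  have S: "S \<subseteq> {\<alpha><..<\<beta>}" "{a<..<b} \<subseteq> S"
    using ab unfolding S_def t1_def by auto
  have t1: "t1 \<in> {\<alpha><..<\<beta>}" "t1 \<notin> S"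
    using ab unfolding S_def t1_def by auto
  have "h t1 \<in> J"
    using h(3) t1(1) by auto
  then obtain f :: "complex \<Rightarrow> real" where f: "continuous_on (J - {h t1}) f" "inj_on f (J - {h t1})"
    using jordan_curve_delete_inj_into_reals[OF assms(1)] by blast
  have hS: "h ` S \<subseteq> J - {h t1}"
  proof
    fix z assume "z \<in> h ` S"
    then obtain t where t: "t \<in> S" "z = h t" by blast
    have "t \<in> {\<alpha><..<\<beta>}" "t \<noteq> t1"
      using t(1) t1(2) S(1) by auto
    then have "h t \<noteq> h t1"
      using inj_on_eq_iff[OF h(2) _ t1(1)] by simp
    moreover have "h t \<in> J"
      using h(3) \<open>t \<in> {\<alpha><..<\<beta>}\<close> by auto
    ultimately show "z \<in> J - {h t1}"
      using t(2) by simp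
  qed
  have "continuous_on S (f \<circ> h)"
    by (rule continuous_on_compose[OF continuous_on_subset[OF h(1) S(1)]])
      (rule continuous_on_subset[OF f(1) hS])
  moreover have "inj_on (f \<circ> h) S"
    by (rule comp_inj_on[OF inj_on_subset[OF h(2) S(1)] inj_on_subset[OF f(2) hS]])
  ultimately have op: "open ((f \<circ> h) ` {a<..<b})"
    by (intro injective_into_1d_imp_open_map_UNIV[OF _ _ _ S(2)]) auto
  have eq: "h ` {a<..<b} = (J - {h t1}) \<inter> f -` ((f \<circ> h) ` {a<..<b})"
  proof
    show "h ` {a<..<b} \<subseteq> (J - {h t1}) \<inter> f -` ((f \<circ> h) ` {a<..<b})"
      using hS S(2) by auto
    show "(J - {h t1}) \<inter> f -` ((f \<circ> h) ` {a<..<b}) \<subseteq> h ` {a<..<b}"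
    proof
      fix z assume z: "z \<in> (J - {h t1}) \<inter> f -` ((f \<circ> h) ` {a<..<b})"
      then obtain t where t: "t \<in> {a<..<b}" "f z = f (h t)" by auto
      then have "h t \<in> J - {h t1}" using hS S(2) by blast
      then have "z = h t"
        using inj_onD[OF f(2) t(2)] z by simp
      then show "z \<in> h ` {a<..<b}"
        using t(1) by simp
    qed
  qed
  have "openin (top_of_set (J - {h t1})) (h ` {a<..<b})"
    unfolding eq by (rule continuous_openin_preimage_gen[OF f(1) op])
  then show ?thesis
    by (rule openin_trans) (rule openin_delete, simp)
qed

lemma connected_disjoint_jordan_curve_on_one_side:
  assumes "jordan_curve J" "connected K" "K \<inter> J = {}"
  shows "K \<subseteq> inside J \<or> K \<subseteq> outside J"
proof -
  have "K \<subseteq> inside J \<union> outside J"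
    using jordan_curve_inside_outside(4)[OF assms(1)] assms(3) by blast
  then show ?thesis
    using connectedD[OF assms(2) jordan_curve_inside_outside(1,2)[OF assms(1)]]
      jordan_curve_inside_outside(3)[OF assms(1)] by blast
qed

lemma C1_uniform_linearization:
  fixes h h' :: "real \<Rightarrow> 'a::real_normed_vector"
  assumes "open S" "t0 \<in> S" and deriv: "\<And>t. t \<in> S \<Longrightarrow> (h has_vector_derivative h' t) (at t)"
    and "continuous_on S h'" "0 < \<epsilon>"
  obtains \<delta> where "0 < \<delta>" "{t0-\<delta>..t0+\<delta>} \<subseteq> S"
    "\<And>x y. x \<in> {t0-\<delta>..t0+\<delta>} \<Longrightarrow> y \<in> {t0-\<delta>..t0+\<delta>} \<Longrightarrow>
       norm (h y - h x - (y - x) *\<^sub>R h' t0) \<le> \<epsilon> * \<bar>y - x\<bar>"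
proof -
  have "isCont h' t0"
    using assms(1,2,4) continuous_on_eq_continuous_at by blast
  then obtain \<delta>1 where \<delta>1: "0 < \<delta>1" "\<And>t. dist t t0 < \<delta>1 \<Longrightarrow> dist (h' t) (h' t0) < \<epsilon>"
    using \<open>0 < \<epsilon>\<close> unfolding continuous_at_eps_delta by blast
  obtain \<delta>2 where \<delta>2: "0 < \<delta>2" "ball t0 \<delta>2 \<subseteq> S"
    using assms(1,2) open_contains_ball by blast
  define \<delta> where "\<delta> = min \<delta>1 \<delta>2 / 2"
  define I where "I = {t0-\<delta>..t0+\<delta>}"
  have "0 < \<delta>"
    using \<delta>1(1) \<delta>2(1) unfolding \<delta>_def by simp
  have dist_I: "dist t t0 < min \<delta>1 \<delta>2" if "t \<in> I" for t
    using that \<open>0 < \<delta>\<close> unfolding I_def \<delta>_def dist_real_def by auto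
  have "I \<subseteq> S"
    using dist_I \<delta>2(2) by (force simp: dist_commute)
  have "norm (h y - h x - (y - x) *\<^sub>R h' t0) \<le> \<epsilon> * \<bar>y - x\<bar>" if "x \<in> I" "y \<in> I" for x y
  proof -
    have "norm (h y - h x - (y - x) *\<^sub>R h' t0) \<le> norm (y - x) * \<epsilon>"
    proof (rule vector_differentiable_bound_linearization[of I])
      show "(h has_vector_derivative h' t) (at t within I)" if "t \<in> I" for t
        using deriv \<open>I \<subseteq> S\<close> that has_vector_derivative_at_within by blast
      show "closed_segment x y \<subseteq> I"
        using that unfolding I_def by (intro closed_segment_subset) auto
      show "norm (h' t - h' t0) \<le> \<epsilon>" if "t \<in> I" for t
        using \<delta>1(2) dist_I[OF that] by (simp add: dist_norm less_imp_le)
      show "t0 \<in> I"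
        using \<open>0 < \<delta>\<close> unfolding I_def by simp
    qed
    then show ?thesis
      by (simp add: mult.commute)
  qed
  then show ?thesis
    using that \<open>0 < \<delta>\<close> \<open>I \<subseteq> S\<close> unfolding I_def by blast
qed

definition vertical_cone :: "real \<Rightarrow> real \<Rightarrow> real \<Rightarrow> complex set" where
  "vertical_cone \<sigma> m r = {w. m * \<bar>Re w\<bar> < \<sigma> * Im w \<and> cmod w < r}"

lemma convex_vertical_cone:
  assumes "0 \<le> m"
  shows "convex (vertical_cone \<sigma> m r)"
proof -
  have "vertical_cone \<sigma> m r =
      {w. inner (Complex (- m) \<sigma>) w > 0} \<inter> {w. inner (Complex m \<sigma>) w > 0} \<inter> ball 0 r"
  proof -
    have "m * \<bar>x\<bar> < y \<longleftrightarrow> 0 < - m * x + y \<and> 0 < m * x + y" for x y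
    proof -
      have "m * \<bar>x\<bar> = \<bar>m * x\<bar>"
        using assms by (simp add: abs_mult)
      then show ?thesis
        by arith
    qed
    then show ?thesis
      unfolding vertical_cone_def by (auto simp: inner_complex_def)
  qed
  then show ?thesis
    by (simp add: convex_Int convex_halfspace_gt convex_ball)
qed

lemma segment_meets_separator:
  fixes p q :: "'a::real_normed_vector"
  assumes "open X" "open Y" "X \<inter> Y = {}" "X \<union> Y = - J" "p \<in> Y" "q \<in> X"
  obtains w where "w \<in> closed_segment p q" "w \<in> J"
proof -
  have "X \<inter> closed_segment p q \<noteq> {}" "Y \<inter> closed_segment p q \<noteq> {}"
    using assms(5,6) ends_in_segment by blast+
  then have "\<not> closed_segment p q \<subseteq> X \<union> Y"
    using connectedD[OF connected_segment assms(1,2)] assms(3) by blast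
  then show ?thesis
    using assms(4) that by blast
qed

text \<open>If both cones lay on one side X, a point p of the other side close to 0 would be separated
  from the cones by points of the curve directly above and below it; since the curve is a graph
  over the real axis near 0, these two points coincide, and then they equal p.\<close>
lemma vertical_cones_not_on_one_side:
  fixes J X Y :: "complex set"
  assumes XY: "open X" "open Y" "X \<inter> Y = {}" "X \<union> Y = - J" "0 \<in> closure Y"
    and "0 < r" "m \<le> 1" and graph: "inj_on Re (J \<inter> ball 0 r)"
    and cones: "vertical_cone 1 m r \<subseteq> X" "vertical_cone (-1) m r \<subseteq> X"
  shows False
proof -
  obtain p where p: "p \<in> Y" "cmod p < r / 4"
    using XY(5) \<open>0 < r\<close> unfolding closure_approachable by (metis dist_0_norm norm_minus_commute
        divide_pos_pos zero_less_numeral dist_norm diff_0_right)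
  have Rep: "\<bar>Re p\<bar> < r / 4" "\<bar>Im p\<bar> < r / 4"
    using p(2) abs_Re_le_cmod abs_Im_le_cmod by (meson le_less_trans)+
  have meets: "\<exists>w\<in>J \<inter> ball 0 r. Re w = Re p \<and> \<sigma> * Im w \<ge> \<sigma> * Im p"
    if \<sigma>: "\<sigma> = 1 \<or> \<sigma> = -1" for \<sigma> :: real
  proof -
    define q where "q = Complex (Re p) (\<sigma> * r / 2)"
    have "cmod q \<le> \<bar>Re p\<bar> + r / 2"
      using cmod_le[of q] \<sigma> \<open>0 < r\<close> unfolding q_def by auto
    then have q: "cmod q < r"
      using Rep by linarith
    moreover have "m * \<bar>Re p\<bar> \<le> \<bar>Re p\<bar>"
      using \<open>m \<le> 1\<close> by (cases "0 \<le> m") (auto intro: mult_left_le_one_le order_trans[OF mult_nonpos_nonneg])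
    then have "m * \<bar>Re q\<bar> < \<sigma> * Im q"
      using Rep \<sigma> unfolding q_def by auto
    ultimately have "q \<in> X"
      using cones \<sigma> unfolding vertical_cone_def by auto
    then obtain w where w: "w \<in> closed_segment p q" "w \<in> J"
      using segment_meets_separator[OF XY(1-4) p(1)] by blast
    then obtain s where s: "0 \<le> s" "s \<le> 1" "w = (1 - s) *\<^sub>R p + s *\<^sub>R q"
      unfolding closed_segment_def by blast
    have "closed_segment p q \<subseteq> ball 0 r"
      using p(2) q \<open>0 < r\<close> by (intro closed_segment_subset) (auto simp: convex_ball)
    moreover have "Re w = Re p"
      unfolding s(3) q_def by (simp add: algebra_simps)
    moreover have "\<sigma> * Im w = \<sigma> * Im p + s * (r / 2 - \<sigma> * Im p)"
      using \<sigma> unfolding s(3) q_def by (auto simp: algebra_simps)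
    moreover have "0 \<le> s * (r / 2 - \<sigma> * Im p)"
      using s(1) Rep \<sigma> by (intro mult_nonneg_nonneg) auto
    ultimately show ?thesis
      using w by (intro bexI[of _ w]) auto
  qed
  obtain w1 w2 where w: "w1 \<in> J \<inter> ball 0 r" "w2 \<in> J \<inter> ball 0 r"
    "Re w1 = Re p" "Re w2 = Re p" "Im w1 \<ge> Im p" "Im w2 \<le> Im p"
    using meets[of 1] meets[of "-1"] by auto
  then have "w1 = w2"
    using inj_onD[OF graph] by simp
  then have "w1 = p"
    using w by (simp add: complex_eq_iff)
  then show False
    using w(1) p(1) XY(3,4) by auto
qed

lemma vertical_cone_disjoint_flat_curve:
  assumes "\<forall>w\<in>J \<inter> ball 0 r. \<bar>Im w\<bar> \<le> m * \<bar>Re w\<bar>" "\<bar>\<sigma>\<bar> = 1"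
  shows "vertical_cone \<sigma> m r \<inter> J = {}"
proof -
  have False if "w \<in> vertical_cone \<sigma> m r" "w \<in> J" for w
  proof -
    have "\<sigma> * Im w \<le> \<bar>Im w\<bar>"
      using assms(2) abs_mult[of \<sigma> "Im w"] by (metis abs_ge_self mult_1)
    moreover have "m * \<bar>Re w\<bar> < \<sigma> * Im w" "\<bar>Im w\<bar> \<le> m * \<bar>Re w\<bar>"
      using that assms(1) unfolding vertical_cone_def by auto
    ultimately show False
      by linarith
  qed
  then show ?thesis
    by blast
qed

lemma connected_through_opposite_cones_meets_flat_curve:
  assumes J: "jordan_curve J" "0 \<in> J"
    and "0 < r" "0 \<le> m" "m \<le> 1"
    and flat: "\<forall>w\<in>J \<inter> ball 0 r. \<bar>Im w\<bar> \<le> m * \<bar>Re w\<bar>"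
    and graph: "inj_on Re (J \<inter> ball 0 r)"
    and C: "connected C" "q1 \<in> C \<inter> vertical_cone \<sigma> m r" "q2 \<in> C \<inter> vertical_cone (- \<sigma>) m r"
    and \<sigma>: "\<bar>\<sigma>\<bar> = 1"
  shows "C \<inter> J \<noteq> {}"
proof
  assume CJ: "C \<inter> J = {}"
  note sides = jordan_curve_inside_outside[OF J(1)]
  have closure: "0 \<in> closure (inside J)" "0 \<in> closure (outside J)"
    using sides(5,6) J(2) by (auto simp: frontier_def)
  have cone_side: "vertical_cone \<tau> m r \<subseteq> inside J \<or> vertical_cone \<tau> m r \<subseteq> outside J"
    if "\<bar>\<tau>\<bar> = 1" for \<tau>
    by (rule connected_disjoint_jordan_curve_on_one_side[OF J(1)])
      (use vertical_cone_disjoint_flat_curve[OF flat that] convex_vertical_cone[OF \<open>0 \<le> m\<close>]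
        convex_connected in auto)
  have not_one_side: "\<not> (vertical_cone \<sigma> m r \<subseteq> X \<and> vertical_cone (- \<sigma>) m r \<subseteq> X)"
    if "X = inside J \<and> Y = outside J \<or> X = outside J \<and> Y = inside J" for X Y
  proof
    assume "vertical_cone \<sigma> m r \<subseteq> X \<and> vertical_cone (- \<sigma>) m r \<subseteq> X"
    then have "vertical_cone 1 m r \<subseteq> X" "vertical_cone (-1) m r \<subseteq> X"
      using \<sigma> by (auto simp: abs_if split: if_splits)
    then show False
      using vertical_cones_not_on_one_side[of X Y J r m] that sides closure \<open>0 < r\<close> \<open>m \<le> 1\<close> graph
      by (auto simp: Un_commute Int_commute)
  qed
  obtain X Y where XY: "X = inside J \<and> Y = outside J \<or> X = outside J \<and> Y = inside J" "C \<subseteq> X"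
    using connected_disjoint_jordan_curve_on_one_side[OF J(1) C(1) CJ] by blast
  have "vertical_cone \<tau> m r \<subseteq> X" if "\<bar>\<tau>\<bar> = 1" "q \<in> C \<inter> vertical_cone \<tau> m r" for \<tau> q
  proof -
    have "q \<in> X" using that(2) XY(2) by blast
    then show ?thesis
      using cone_side[OF that(1)] XY(1) sides(3) that(2) by blast
  qed
  then show False
    using not_one_side[OF XY(1)] C(2,3) \<sigma> by simp
qed

definition cone_slope :: "complex \<Rightarrow> real" where
  "cone_slope \<omega> = \<bar>Im \<omega>\<bar> / (4 * cmod \<omega>)"

lemma cone_slope_pos: "Im \<omega> \<noteq> 0 \<Longrightarrow> 0 < cone_slope \<omega>"
  unfolding cone_slope_def by (auto intro!: divide_pos_pos)

lemma cone_slope_le: "cone_slope \<omega> \<le> 1 / 4"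
  unfolding cone_slope_def using abs_Im_le_cmod[of \<omega>]
  by (cases "\<omega> = 0") (auto simp: field_simps)

text \<open>The line \<omega> * \<real> has slope at least 4 * cone_slope \<omega> in absolute value, which leaves room
  for a perturbation of relative size cone_slope \<omega> / 4.\<close>
lemma rotation_moves_near_real_into_cone:
  fixes \<omega> z :: complex and d :: real
  assumes "Im \<omega> \<noteq> 0" "d \<noteq> 0" and near: "cmod (z - of_real d) \<le> cone_slope \<omega> / 4 * \<bar>d\<bar>"
  shows "cone_slope \<omega> * \<bar>Re (\<omega> * z)\<bar> < sgn (d * Im \<omega>) * Im (\<omega> * z)"
proof -
  define m where "m = cone_slope \<omega>"
  define s where "s = \<bar>Im \<omega>\<bar>"
  define e where "e = \<omega> * (z - of_real d)"
  have "0 < s" "0 < \<bar>d\<bar>" "0 < cmod \<omega>"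
    using assms(1,2) unfolding s_def by auto
  have m: "m * cmod \<omega> = s / 4" "0 \<le> m" "m \<le> 1 / 4"
    using \<open>0 < cmod \<omega>\<close> cone_slope_le[of \<omega>] unfolding m_def s_def cone_slope_def by auto
  have "cmod e \<le> cmod \<omega> * (m / 4 * \<bar>d\<bar>)"
    unfolding e_def norm_mult using near m_def by (intro mult_left_mono) auto
  also have "\<dots> = s * \<bar>d\<bar> / 16"
    using m(1) by (simp add: field_simps)
  finally have e: "\<bar>Im e\<bar> \<le> s * \<bar>d\<bar> / 16" "\<bar>Re e\<bar> \<le> s * \<bar>d\<bar> / 16"
    using abs_Im_le_cmod abs_Re_le_cmod order_trans by blast+
  have z: "\<omega> * z = of_real d * \<omega> + e"
    unfolding e_def by (simp add: algebra_simps)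
  have "sgn (d * Im \<omega>) * Im (of_real d * \<omega>) = s * \<bar>d\<bar>"
    unfolding s_def by (simp add: abs_mult sgn_mult abs_sgn mult_ac)
  moreover have "\<bar>sgn (d * Im \<omega>) * Im e\<bar> \<le> s * \<bar>d\<bar> / 16"
    using e(1) assms(1,2) by (simp add: abs_mult sgn_mult)
  ultimately have lower: "s * \<bar>d\<bar> * 15 / 16 \<le> sgn (d * Im \<omega>) * Im (\<omega> * z)"
    unfolding z by (simp add: distrib_left)
  have "\<bar>Re (of_real d * \<omega>)\<bar> \<le> \<bar>d\<bar> * cmod \<omega>"
    using abs_Re_le_cmod[of "of_real d * \<omega>"] by (simp add: norm_mult)
  then have "\<bar>Re (\<omega> * z)\<bar> \<le> \<bar>d\<bar> * cmod \<omega> + s * \<bar>d\<bar> / 16"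
    using e(2) unfolding z by simp
  then have "m * \<bar>Re (\<omega> * z)\<bar> \<le> m * (\<bar>d\<bar> * cmod \<omega> + s * \<bar>d\<bar> / 16)"
    by (rule mult_left_mono[OF _ m(2)])
  also have "\<dots> = \<bar>d\<bar> * (m * cmod \<omega>) + m * (s * \<bar>d\<bar> / 16)"
    by (simp add: algebra_simps)
  also have "\<dots> \<le> \<bar>d\<bar> * (s / 4) + 1 / 4 * (s * \<bar>d\<bar> / 16)"
    using m \<open>0 < s\<close> by (intro add_mono mult_right_mono) auto
  also have "\<dots> < s * \<bar>d\<bar> * 15 / 16"
    using \<open>0 < s\<close> \<open>0 < \<bar>d\<bar>\<close> by (simp add: field_simps)
  finally show ?thesis
    using lower unfolding m_def by linarith
qed

lemma rotation_near_real_in_vertical_cone: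
  fixes \<omega> z :: complex and d :: real
  assumes "Im \<omega> \<noteq> 0" "d \<noteq> 0" and near: "cmod (z - of_real d) \<le> cone_slope \<omega> / 4 * \<bar>d\<bar>"
    and "4 * cmod \<omega> * \<bar>d\<bar> \<le> r"
  shows "\<omega> * z \<in> vertical_cone (sgn (d * Im \<omega>)) (cone_slope \<omega>) r" "z \<noteq> 0"
proof -
  have small: "cone_slope \<omega> / 4 * \<bar>d\<bar> < \<bar>d\<bar>"
    using cone_slope_le[of \<omega>] \<open>d \<noteq> 0\<close> by (simp add: field_simps)
  have "cmod z \<le> \<bar>d\<bar> + cmod (z - of_real d)"
    using norm_triangle_sub[of z "of_real d"] by simp
  then have "cmod (\<omega> * z) \<le> cmod \<omega> * (2 * \<bar>d\<bar>)"
    unfolding norm_mult using near small by (intro mult_left_mono) auto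
  also have "\<dots> < r"
  proof -
    have "\<omega> \<noteq> 0"
      using assms(1) by auto
    then have "0 < cmod \<omega> * \<bar>d\<bar>"
      using assms(2) by simp
    then show ?thesis
      using assms(4) by (simp add: mult.assoc mult.left_commute)
  qed
  finally have "cmod (\<omega> * z) < r" .
  then show "\<omega> * z \<in> vertical_cone (sgn (d * Im \<omega>)) (cone_slope \<omega>) r"
    using rotation_moves_near_real_into_cone[OF assms(1-3)] unfolding vertical_cone_def by simp
  have "\<bar>d\<bar> - cmod z \<le> cmod (z - of_real d)"
    using norm_triangle_ineq2[of "of_real d" z] by (simp add: norm_minus_commute)
  then show "z \<noteq> 0"
    using near small by auto
qed

lemma flat_graph_if_near_identity_parametrization:
  fixes J :: "complex set" and p :: "real \<Rightarrow> complex"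
  assumes m: "0 < m" "m \<le> 1 / 4" and "0 \<le> \<delta>" "p 0 = 0"
    and lin: "\<And>x y. x \<in> {-\<delta>..\<delta>} \<Longrightarrow> y \<in> {-\<delta>..\<delta>} \<Longrightarrow>
       cmod (p y - p x - of_real (y - x)) \<le> m / 4 * \<bar>y - x\<bar>"
    and local: "J \<inter> ball 0 r \<subseteq> p ` {-\<delta>..\<delta>}"
  shows "\<forall>w\<in>J \<inter> ball 0 r. \<bar>Im w\<bar> \<le> m * \<bar>Re w\<bar>" "inj_on Re (J \<inter> ball 0 r)"
proof
  fix w assume "w \<in> J \<inter> ball 0 r"
  then obtain t where t: "t \<in> {-\<delta>..\<delta>}" "w = p t"
    using local by blast
  have Im: "\<bar>Im w\<bar> \<le> m / 4 * \<bar>t\<bar>" and Re: "\<bar>Re w - t\<bar> \<le> m / 4 * \<bar>t\<bar>"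
    using lin[OF _ t(1), of 0] \<open>0 \<le> \<delta>\<close> \<open>p 0 = 0\<close> abs_Im_le_cmod[of "p t - of_real t"]
      abs_Re_le_cmod[of "p t - of_real t"]
    unfolding t(2) by auto
  have "m * (1 / 4) * \<bar>t\<bar> \<le> m * (1 - m / 4) * \<bar>t\<bar>"
    using m by (intro mult_right_mono mult_left_mono) auto
  then have "m / 4 * \<bar>t\<bar> \<le> m * ((1 - m / 4) * \<bar>t\<bar>)"
    by (simp add: mult.assoc)
  also have "\<dots> \<le> m * \<bar>Re w\<bar>"
  proof (intro mult_left_mono)
    have "\<bar>t\<bar> \<le> \<bar>Re w\<bar> + \<bar>Re w - t\<bar>"
      by arith
    then show "(1 - m / 4) * \<bar>t\<bar> \<le> \<bar>Re w\<bar>"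
      using Re by (simp add: algebra_simps)
  qed (use m in auto)
  finally show "\<bar>Im w\<bar> \<le> m * \<bar>Re w\<bar>"
    using Im by linarith
next
  show "inj_on Re (J \<inter> ball 0 r)"
  proof
    fix w1 w2 assume w: "w1 \<in> J \<inter> ball 0 r" "w2 \<in> J \<inter> ball 0 r" "Re w1 = Re w2"
    then obtain t1 t2 where t: "t1 \<in> {-\<delta>..\<delta>}" "t2 \<in> {-\<delta>..\<delta>}" "w1 = p t1" "w2 = p t2"
      using local by blast
    have "\<bar>Re (p t2 - p t1 - of_real (t2 - t1))\<bar> \<le> m / 4 * \<bar>t2 - t1\<bar>"
      using lin[OF t(1,2)] abs_Re_le_cmod order_trans by blast
    then have "\<bar>t2 - t1\<bar> \<le> m / 4 * \<bar>t2 - t1\<bar>"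
      using w(3) t(3,4) by (simp add: abs_minus_commute)
    then have "t1 = t2"
      using m by (cases "t1 = t2") (auto simp: mult_le_cancel_right1)
    then show "w1 = w2"
      using t by simp
  qed
qed

lemma jordan_curve_meets_rotation_at_flat_point:
  fixes J :: "complex set" and p :: "real \<Rightarrow> complex" and \<omega> :: complex
  assumes J: "jordan_curve J" and "Im \<omega> \<noteq> 0" "0 < \<delta>" "0 < r"
    and p: "p 0 = 0" "p ` {-\<delta>..\<delta>} \<subseteq> J"
    and lin: "\<And>x y. x \<in> {-\<delta>..\<delta>} \<Longrightarrow> y \<in> {-\<delta>..\<delta>} \<Longrightarrow>
       cmod (p y - p x - of_real (y - x)) \<le> cone_slope \<omega> / 4 * \<bar>y - x\<bar>"
    and local: "J \<inter> ball 0 r \<subseteq> p ` {-\<delta>..\<delta>}"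
  obtains w where "w \<in> J" "w \<noteq> 0" "\<omega> * w \<in> J"
proof -
  define m where "m = cone_slope \<omega>"
  have m: "0 < m" "m \<le> 1 / 4"
    using cone_slope_pos[OF \<open>Im \<omega> \<noteq> 0\<close>] cone_slope_le unfolding m_def by auto
  note flat = flat_graph_if_near_identity_parametrization[OF m less_imp_le[OF \<open>0 < \<delta>\<close>] p(1)
      lin[folded m_def] local]
  have near: "cmod (p t - of_real t) \<le> m / 4 * \<bar>t\<bar>" if "t \<in> {-\<delta>..\<delta>}" for t
    using lin[OF _ that, of 0] \<open>0 < \<delta>\<close> p(1) unfolding m_def by simp
  have "0 \<in> J"
    using p \<open>0 < \<delta>\<close> by force
  define d where "d = min \<delta> (r / (4 * cmod \<omega>))"
  have "0 < d" "d \<le> \<delta>" "4 * cmod \<omega> * d \<le> r"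
    using \<open>0 < \<delta>\<close> \<open>0 < r\<close> \<open>Im \<omega> \<noteq> 0\<close> unfolding d_def
    by (auto simp: min_def field_simps complex_eq_iff)
  have in_cone: "\<omega> * p t \<in> vertical_cone (sgn (t * Im \<omega>)) m r" "p t \<in> J - {0}"
    if "\<bar>t\<bar> = d" for t
  proof -
    have t: "t \<in> {-\<delta>..\<delta>}" "t \<noteq> 0"
      using that \<open>0 < d\<close> \<open>d \<le> \<delta>\<close> by auto
    note rotation_near_real_in_vertical_cone[OF \<open>Im \<omega> \<noteq> 0\<close> t(2) near[OF t(1), unfolded m_def]]
    then show "\<omega> * p t \<in> vertical_cone (sgn (t * Im \<omega>)) m r" "p t \<in> J - {0}"
      using \<open>4 * cmod \<omega> * d \<le> r\<close> \<open>0 < \<delta>\<close> p t(1) that unfolding m_def by auto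
  qed
  define C where "C = (\<lambda>z. \<omega> * z) ` (J - {0})"
  have "connected C"
    unfolding C_def
    by (intro connected_continuous_image connected_jordan_curve_delete[OF J \<open>0 \<in> J\<close>] continuous_intros)
  moreover have "\<omega> * p d \<in> C \<inter> vertical_cone (sgn (d * Im \<omega>)) m r"
    "\<omega> * p (- d) \<in> C \<inter> vertical_cone (- sgn (d * Im \<omega>)) m r"
    using in_cone[of d] in_cone[of "- d"] \<open>0 < d\<close> unfolding C_def by (auto simp: sgn_mult)
  moreover have "\<bar>sgn (d * Im \<omega>)\<bar> = 1"
    using \<open>0 < d\<close> \<open>Im \<omega> \<noteq> 0\<close> by (simp add: abs_sgn_eq)
  ultimately have "C \<inter> J \<noteq> {}"
    using connected_through_opposite_cones_meets_flat_curve[OF J \<open>0 \<in> J\<close> \<open>0 < r\<close> _ _ flat] m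
    by simp
  then show ?thesis
    using that unfolding C_def by auto
qed

lemma cont_turning_tangents_near_imp_linearized_arc:
  assumes J: "jordan_curve J" and smooth: "cont_turning_tangents_near J A0" and "0 < \<epsilon>"
  obtains h :: "real \<Rightarrow> complex" and u :: complex and t0 \<delta> R :: real
  where "u \<noteq> 0" "0 < \<delta>" "0 < R" "A0 = h t0" "h ` {t0-\<delta>..t0+\<delta>} \<subseteq> J"
    "\<And>x y. x \<in> {t0-\<delta>..t0+\<delta>} \<Longrightarrow> y \<in> {t0-\<delta>..t0+\<delta>} \<Longrightarrow>
       cmod (h y - h x - (y - x) *\<^sub>R u) \<le> \<epsilon> * cmod u * \<bar>y - x\<bar>"
    "ball A0 R \<inter> J \<subseteq> h ` {t0-\<delta>..t0+\<delta>}"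
proof -
  obtain \<alpha> \<beta> h h' where h: "inj_on h {\<alpha><..<\<beta>}" "h ` {\<alpha><..<\<beta>} \<subseteq> J"
    "A0 \<in> h ` {\<alpha><..<\<beta>}" "\<forall>t\<in>{\<alpha><..<\<beta>}. (h has_vector_derivative h' t) (at t)"
    "continuous_on {\<alpha><..<\<beta>} h'" "\<forall>t\<in>{\<alpha><..<\<beta>}. h' t \<noteq> 0"
    using smooth unfolding cont_turning_tangents_near_def by blast
  obtain t0 where t0: "t0 \<in> {\<alpha><..<\<beta>}" "A0 = h t0"
    using h(3) by blast
  have "h' t0 \<noteq> 0"
    using h(6) t0(1) by blast
  have "continuous_on {\<alpha><..<\<beta>} h"
    using h(4) by (intro continuous_at_imp_continuous_on) (auto intro: has_vector_derivative_continuous)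
  obtain \<delta> where \<delta>: "0 < \<delta>" "{t0-\<delta>..t0+\<delta>} \<subseteq> {\<alpha><..<\<beta>}"
    and lin: "\<And>x y. x \<in> {t0-\<delta>..t0+\<delta>} \<Longrightarrow> y \<in> {t0-\<delta>..t0+\<delta>} \<Longrightarrow>
       cmod (h y - h x - (y - x) *\<^sub>R h' t0) \<le> \<epsilon> * cmod (h' t0) * \<bar>y - x\<bar>"
    using C1_uniform_linearization[of "{\<alpha><..<\<beta>}" t0 h h' "\<epsilon> * cmod (h' t0)"]
      h(4,5) t0(1) \<open>0 < \<epsilon>\<close> \<open>h' t0 \<noteq> 0\<close> by auto
  have "t0 - \<delta> \<in> {t0-\<delta>..t0+\<delta>}" "t0 + \<delta> \<in> {t0-\<delta>..t0+\<delta>}"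
    using \<delta>(1) by auto
  then have "t0 - \<delta> \<in> {\<alpha><..<\<beta>}" "t0 + \<delta> \<in> {\<alpha><..<\<beta>}"
    using \<delta>(2) by blast+
  then have "openin (top_of_set J) (h ` {t0-\<delta><..<t0+\<delta>})"
    using \<delta>(1) by (intro openin_image_interval_in_jordan_curve[OF J \<open>continuous_on _ h\<close> h(1,2)]) auto
  then obtain R where R: "0 < R" "ball A0 R \<inter> J \<subseteq> h ` {t0-\<delta><..<t0+\<delta>}"
    using \<delta>(1) unfolding openin_contains_ball t0(2) by force
  show ?thesis
  proof (rule that[OF \<open>h' t0 \<noteq> 0\<close> \<delta>(1) R(1) t0(2) _ lin])
    show "h ` {t0-\<delta>..t0+\<delta>} \<subseteq> J"
      using image_mono[OF \<delta>(2)] h(2) by (rule order_trans)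
    show "ball A0 R \<inter> J \<subseteq> h ` {t0-\<delta>..t0+\<delta>}"
      using R(2) image_mono[of "{t0-\<delta><..<t0+\<delta>}" "{t0-\<delta>..t0+\<delta>}" h] by auto
  qed
qed

lemma cont_turning_tangents_near_imp_flat_chart:
  assumes J: "jordan_curve J" and smooth: "cont_turning_tangents_near J A0" and "0 < \<epsilon>"
  obtains u :: complex and \<delta> R :: real and p :: "real \<Rightarrow> complex" where "u \<noteq> 0" "0 < \<delta>" "0 < R" "p 0 = 0"
    "\<And>t. t \<in> {-\<delta>..\<delta>} \<Longrightarrow> A0 + u * p t \<in> J"
    "\<And>x y. x \<in> {-\<delta>..\<delta>} \<Longrightarrow> y \<in> {-\<delta>..\<delta>} \<Longrightarrow>
       cmod (p y - p x - of_real (y - x)) \<le> \<epsilon> * \<bar>y - x\<bar>"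
    "\<And>z. z \<in> J \<Longrightarrow> cmod (z - A0) < R \<Longrightarrow> \<exists>t\<in>{-\<delta>..\<delta>}. z = A0 + u * p t"
proof -
  obtain h :: "real \<Rightarrow> complex" and u :: complex and t0 \<delta> R :: real
    where h: "u \<noteq> 0" "0 < \<delta>" "0 < R" "A0 = h t0" "h ` {t0-\<delta>..t0+\<delta>} \<subseteq> J"
    and lin: "\<And>x y. x \<in> {t0-\<delta>..t0+\<delta>} \<Longrightarrow> y \<in> {t0-\<delta>..t0+\<delta>} \<Longrightarrow>
       cmod (h y - h x - (y - x) *\<^sub>R u) \<le> \<epsilon> * cmod u * \<bar>y - x\<bar>"
    and R: "ball A0 R \<inter> J \<subseteq> h ` {t0-\<delta>..t0+\<delta>}"
    by (rule cont_turning_tangents_near_imp_linearized_arc[OF J smooth \<open>0 < \<epsilon>\<close>]) (rule that)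
  define p where "p t = (h (t0 + t) - A0) / u" for t
  have h_p: "h (t0 + t) = A0 + u * p t" for t
    unfolding p_def using h(1) by simp
  show ?thesis
  proof
    show "p 0 = 0"
      unfolding p_def h(4) by simp
    show "A0 + u * p t \<in> J" if "t \<in> {-\<delta>..\<delta>}" for t
      using that h(5) unfolding h_p[symmetric] by force
    show "cmod (p y - p x - of_real (y - x)) \<le> \<epsilon> * \<bar>y - x\<bar>"
      if "x \<in> {-\<delta>..\<delta>}" "y \<in> {-\<delta>..\<delta>}" for x y
    proof -
      have "p y - p x - of_real (y - x) = (h (t0 + y) - h (t0 + x) - (y - x) *\<^sub>R u) / u"
        unfolding p_def using h(1) by (simp add: field_simps scaleR_conv_of_real)
      then have "cmod (p y - p x - of_real (y - x)) =
          cmod (h (t0 + y) - h (t0 + x) - (y - x) *\<^sub>R u) / cmod u"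
        by (simp only: norm_divide)
      also have "\<dots> \<le> \<epsilon> * cmod u * \<bar>y - x\<bar> / cmod u"
        using lin[of "t0 + x" "t0 + y"] that by (intro divide_right_mono) auto
      also have "\<dots> = \<epsilon> * \<bar>y - x\<bar>"
        using h(1) by simp
      finally show ?thesis .
    qed
    show "\<exists>t\<in>{-\<delta>..\<delta>}. z = A0 + u * p t" if "z \<in> J" "cmod (z - A0) < R" for z
    proof -
      have "z \<in> ball A0 R \<inter> J"
        using that by (simp add: dist_norm norm_minus_commute)
      then obtain t where "t \<in> {t0-\<delta>..t0+\<delta>}" "z = h t"
        using R by blast
      then show ?thesis
        using h_p[of "t - t0"] by (intro bexI[of _ "t - t0"]) auto
    qed
  qed (use h(1-3) in auto)
qed

lemma jordan_curve_meets_rotation_at_smooth_point: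
  assumes J: "jordan_curve J" and smooth: "cont_turning_tangents_near J A0" and "Im \<omega> \<noteq> 0"
  obtains z where "z \<in> J" "z \<noteq> A0" "A0 + \<omega> * (z - A0) \<in> J"
proof -
  have "0 < cone_slope \<omega> / 4"
    using cone_slope_pos[OF \<open>Im \<omega> \<noteq> 0\<close>] by simp
  then obtain u :: complex and \<delta> R :: real and p :: "real \<Rightarrow> complex" where chart: "u \<noteq> 0" "0 < \<delta>" "0 < R" "p 0 = 0"
    "\<And>t. t \<in> {-\<delta>..\<delta>} \<Longrightarrow> A0 + u * p t \<in> J"
    "\<And>x y. x \<in> {-\<delta>..\<delta>} \<Longrightarrow> y \<in> {-\<delta>..\<delta>} \<Longrightarrow>
       cmod (p y - p x - of_real (y - x)) \<le> cone_slope \<omega> / 4 * \<bar>y - x\<bar>"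
    "\<And>z. z \<in> J \<Longrightarrow> cmod (z - A0) < R \<Longrightarrow> \<exists>t\<in>{-\<delta>..\<delta>}. z = A0 + u * p t"
    by (rule cont_turning_tangents_near_imp_flat_chart[OF J smooth]) (rule that)
  define F where "F z = (z - A0) / u" for z
  have F: "F (A0 + u * w) = w" "A0 + u * F z = z" for w z
    unfolding F_def using \<open>u \<noteq> 0\<close> by auto
  obtain w where w: "w \<in> F ` J" "w \<noteq> 0" "\<omega> * w \<in> F ` J"
  proof (rule jordan_curve_meets_rotation_at_flat_point)
    show "jordan_curve (F ` J)"
      using \<open>u \<noteq> 0\<close> unfolding F_def
      by (intro jordan_curve_continuous_image[OF J] continuous_intros inj_onI) auto
    show "p ` {-\<delta>..\<delta>} \<subseteq> F ` J"
      using chart(5) F(1) by (metis image_eqI image_subsetI)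
    show "F ` J \<inter> ball 0 (R / cmod u) \<subseteq> p ` {-\<delta>..\<delta>}"
    proof
      fix w assume "w \<in> F ` J \<inter> ball 0 (R / cmod u)"
      then obtain z where "z \<in> J" "w = F z" "cmod (z - A0) < R"
        using \<open>u \<noteq> 0\<close> unfolding F_def by (auto simp: norm_divide field_simps)
      then show "w \<in> p ` {-\<delta>..\<delta>}"
        using chart(7) F(1) by force
    qed
  qed (use chart \<open>Im \<omega> \<noteq> 0\<close> in auto)
  show ?thesis
  proof (rule that)
    show "A0 + u * w \<in> J" "A0 + u * w \<noteq> A0"
      using w(1,2) F(2) \<open>u \<noteq> 0\<close> by auto
    obtain z2 where "z2 \<in> J" "\<omega> * w = F z2"
      using w(3) by blast
    then show "A0 + \<omega> * (A0 + u * w - A0) \<in> J"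
      using F(2)[of z2] by (metis add_diff_cancel_left' mult.left_commute)
  qed
qed

theorem corollary1p5:
  fixes J :: "complex set" and A0 a b c :: complex
  assumes "jordan_curve J" and "A0 \<in> J" and "cont_turning_tangents_near J A0"
    and "\<not> collinear {a, b, c}"
  shows "\<exists>A1 A2. A1 \<in> J \<and> A2 \<in> J \<and> similar_tri A0 A1 A2 a b c"
proof -
  define \<omega> where "\<omega> = (c - a) / (b - a)"
  have "Im \<omega> \<noteq> 0"
    using Im_ratio_nonzero_if_not_collinear[OF assms(4)] unfolding \<omega>_def .
  then have "b \<noteq> a"
    unfolding \<omega>_def by auto
  obtain z where "z \<in> J" "z \<noteq> A0" "A0 + \<omega> * (z - A0) \<in> J"
    using jordan_curve_meets_rotation_at_smooth_point[OF assms(1,3) \<open>Im \<omega> \<noteq> 0\<close>] .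
  moreover have "similar_tri A0 z (A0 + \<omega> * (z - A0)) a b c"
    using similar_tri_if_rotation[OF \<open>b \<noteq> a\<close> \<open>z \<noteq> A0\<close>] unfolding \<omega>_def by simp
  ultimately show ?thesis
    by blast
qed

end
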